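(* Let $\mathcal G$ encode a fine mixed subdivision of $n\Delta^{d-1}$ with $n\ge2$, let $t$ be a lattice point of $(n-2)\Delta^{d-1}$, and suppose $\bar j_0,\bar j_1,\dots,\bar j_\ell$ ($\ell\ge1$) is a path in $\mathbb G(t)$ where, for $0\le k\le\ell-1$, the edge between $\bar j_k$ and $\bar j_{k+1}$ has near label $i_k$ at $\bar j_k$ and near label $i'_{k+1}$ at $\bar j_{k+1}$. Then: (a) for each $0\le k\le\ell-1$, in the graph $\mathbb T(t+e_{\bar j_k})\setminus(i_k,\bar j_k)$ the vertices $\bar j_0,\dots,\bar j_k$ lie in a different connected component from the vertices $\bar j_{k+1},\dots,\bar j_\ell$; (b) for all $1\le k\le k'\le\ell-1$, $i'_k\neq i_{k'}$; (c) if $(i,\bar j_k)\in T_t$ for some $0\le k\le\ell$, then $i_{k'}\neq i$ for all $k\le k'\le\ell-1$ and $i'_{k'}\neq i$ for all $1\le k'\le k$.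
   Context: Fix positive integers $n,d$; $K_{n,d}$ is the complete bipartite graph with left vertices $[n]$ and right vertices $[\bar d]=\{\bar1,\dots,\bar d\}$; graphs are identified with edge sets; $RD$ denotes the vector of right-vertex degrees, $\mathbf 1$ the all-ones vector in $\mathbb Z^{[\bar d]}$, $e_{\bar j}$ a unit vector; lattice points of $k\Delta^{d-1}$ are vectors in $\mathbb Z_{\ge0}^{[\bar d]}$ with sum $k$. Two acyclic subgraphs are compatible if whenever both contain a perfect matching between the same $I\subseteq[n]$, $\bar J\subseteq[\bar d]$, these matchings coincide. A collection $\mathcal G$ of subgraphs of $K_{n,d}$ encodes a fine mixed subdivision of $n\Delta^{d-1}$ if: every $G\in\mathcal G$ is a spanning tree of $K_{n,d}$; (tree linkage) for each $G\in\mathcal G$ and each edge $e\in G$ not incident to a leaf, there are $G'\in\mathcal G$, $G'\neq G$, and $e'\in G'$ with $G\setminus e=G'\setminus e'$; (compatibility) any two trees of $\mathcal G$ are compatible. It is known that then for each lattice point $u$ of $(n-1)\Delta^{d-1}$ there is exactly one tree $\mathbb T(u)\in\mathcal G$ with $RD(\mathbb T(u))=u+\mathbf 1$, and these are all the trees of $\mathcal G$. For a lattice point $t$ of $(n-2)\Delta^{d-1}$, the tree-linkage graph $\mathbb G(t)$ is the graph on vertex set $[\bar d]$ in which $\bar j\neq\bar j'$ are adjacent iff $\mathbb T(t+e_{\bar j})\setminus\mathbb T(t+e_{\bar j'})=\{(i,\bar j)\}$ and $\mathbb T(t+e_{\bar j'})\setminus\mathbb T(t+e_{\bar j})=\{(i',\bar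 j')\}$ for some $i,i'\in[n]$; this edge carries the near label $i$ at its endpoint $\bar j$ and the near label $i'$ at its endpoint $\bar j'$. Let $T_t=\bigcap_{\bar j\in[\bar d]}\mathbb T(t+e_{\bar j})$. *)

theory Defs
  imports Main
begin

text \<open>Left vertices of K_{n,d} are 1..n, right vertices are 1..d (the barred ones).
  A graph is an edge set of pairs (i, j) with i a left and j a right vertex.\<close>

datatype vert = Lv nat | Rv nat

type_synonym graph = "(nat \<times> nat) set"

definition verts :: "nat \<Rightarrow> nat \<Rightarrow> vert set" where
  "verts n d = Lv ` {1..n} \<union> Rv ` {1..d}"

definition adj :: "graph \<Rightarrow> (vert \<times> vert) set" where
  "adj G = {(Lv i, Rv j) | i j. (i, j) \<in> G} \<union> {(Rv j, Lv i) | i j. (i, j) \<in> G}"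

definition conn :: "graph \<Rightarrow> vert \<Rightarrow> vert \<Rightarrow> bool" where
  "conn G u v \<longleftrightarrow> (u, v) \<in> (adj G)\<^sup>*"

definition is_cycle :: "graph \<Rightarrow> vert list \<Rightarrow> bool" where
  "is_cycle G vs \<longleftrightarrow> length vs \<ge> 3 \<and> distinct vs \<and>
     (\<forall>k < length vs - 1. (vs ! k, vs ! Suc k) \<in> adj G) \<and>
     (last vs, hd vs) \<in> adj G"

definition acyclic_graph :: "graph \<Rightarrow> bool" where
  "acyclic_graph G \<longleftrightarrow> \<not> (\<exists>vs. is_cycle G vs)"

definition subgraph_Knd :: "nat \<Rightarrow> nat \<Rightarrow> graph \<Rightarrow> bool" where
  "subgraph_Knd n d G \<longleftrightarrow> G \<subseteq> {1..n} \<times> {1..d}"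

definition spanning_tree :: "nat \<Rightarrow> nat \<Rightarrow> graph \<Rightarrow> bool" where
  "spanning_tree n d G \<longleftrightarrow> subgraph_Knd n d G \<and> acyclic_graph G \<and>
     (\<forall>u \<in> verts n d. \<forall>v \<in> verts n d. conn G u v)"

definition degree :: "graph \<Rightarrow> vert \<Rightarrow> nat" where
  "degree G v = card {w. (v, w) \<in> adj G}"

definition is_leaf :: "graph \<Rightarrow> vert \<Rightarrow> bool" where
  "is_leaf G v \<longleftrightarrow> degree G v = 1"

definition perfect_matching :: "graph \<Rightarrow> nat set \<Rightarrow> nat set \<Rightarrow> bool" where
  "perfect_matching M I J \<longleftrightarrow> M \<subseteq> I \<times> J \<and>
     (\<forall>i \<in> I. \<exists>!j. (i, j) \<in> M) \<and> (\<forall>j \<in> J. \<exists>!i. (i, j) \<in> M)"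

definition compatible :: "nat \<Rightarrow> nat \<Rightarrow> graph \<Rightarrow> graph \<Rightarrow> bool" where
  "compatible n d G G' \<longleftrightarrow>
     (\<forall>I J M M'. I \<subseteq> {1..n} \<longrightarrow> J \<subseteq> {1..d} \<longrightarrow>
        M \<subseteq> G \<longrightarrow> perfect_matching M I J \<longrightarrow>
        M' \<subseteq> G' \<longrightarrow> perfect_matching M' I J \<longrightarrow> M = M')"

definition encodes_fmsd :: "nat \<Rightarrow> nat \<Rightarrow> graph set \<Rightarrow> bool" where
  "encodes_fmsd n d \<G> \<longleftrightarrow>
     (\<forall>G \<in> \<G>. spanning_tree n d G) \<and>
     (\<forall>G \<in> \<G>. \<forall>e \<in> G. \<not> is_leaf G (Lv (fst e)) \<and> \<not> is_leaf G (Rv (snd e)) \<longrightarrow>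
        (\<exists>G' \<in> \<G>. G' \<noteq> G \<and> (\<exists>e' \<in> G'. G - {e} = G' - {e'}))) \<and>
     (\<forall>G \<in> \<G>. \<forall>G' \<in> \<G>. compatible n d G G')"

definition RD :: "graph \<Rightarrow> nat \<Rightarrow> nat" where
  "RD G j = card {i. (i, j) \<in> G}"

text \<open>Lattice points of k\<Delta>^{d-1}: nonnegative integer vectors indexed by 1..d with sum k.\<close>
definition lattice_pt :: "nat \<Rightarrow> nat \<Rightarrow> (nat \<Rightarrow> nat) \<Rightarrow> bool" where
  "lattice_pt d k u \<longleftrightarrow> (\<forall>j. j \<notin> {1..d} \<longrightarrow> u j = 0) \<and> (\<Sum>j\<in>{1..d}. u j) = k"

definition plus_e :: "(nat \<Rightarrow> nat) \<Rightarrow> nat \<Rightarrow> nat \<Rightarrow> nat" where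
  "plus_e t j = (\<lambda>j'. t j' + (if j' = j then 1 else 0))"

definition has_RD :: "nat \<Rightarrow> graph \<Rightarrow> (nat \<Rightarrow> nat) \<Rightarrow> bool" where
  "has_RD d G u \<longleftrightarrow> (\<forall>j \<in> {1..d}. RD G j = u j + 1)"

text \<open>\<T>(u): the unique tree of the collection with RD = u + 1.\<close>
definition TT :: "nat \<Rightarrow> graph set \<Rightarrow> (nat \<Rightarrow> nat) \<Rightarrow> graph" where
  "TT d \<G> u = (THE G. G \<in> \<G> \<and> has_RD d G u)"

text \<open>Edge of the tree-linkage graph \<G>(t) between j and j' with near label i at j and i' at j'.\<close>
definition linkage_edge :: "nat \<Rightarrow> graph set \<Rightarrow> (nat \<Rightarrow> nat) \<Rightarrow> nat \<Rightarrow> nat \<Rightarrow> nat \<Rightarrow> nat \<Rightarrow> bool" where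
  "linkage_edge d \<G> t j j' i i' \<longleftrightarrow> j \<in> {1..d} \<and> j' \<in> {1..d} \<and> j \<noteq> j' \<and>
     TT d \<G> (plus_e t j) - TT d \<G> (plus_e t j') = {(i, j)} \<and>
     TT d \<G> (plus_e t j') - TT d \<G> (plus_e t j) = {(i', j')}"

definition T_t :: "nat \<Rightarrow> graph set \<Rightarrow> (nat \<Rightarrow> nat) \<Rightarrow> graph" where
  "T_t d \<G> t = (\<Inter>j \<in> {1..d}. TT d \<G> (plus_e t j))"

end

(*
  Write T_k for the tree TT(t + e_(j_k)) and F_k = T_k - (i_k, j_k) = T_(k+1) - (i'_(k+1), j_(k+1))
  for the forest shared by consecutive trees of the path. The key fact is an exchange lemma: if two
  compatible spanning trees differ by exchanging (i, j) for (i', j') with j <> j', then j and j'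
  lie in different components of their common forest. Otherwise the two exchanged edges close a
  cycle through that forest, and its two alternating perfect matchings, one in each tree, would
  have to coincide, putting (i, j) into both trees.

  Applied to T_k and T_(k+2), the exchange lemma shows that the two near labels at every inner
  vertex j_(k+1) differ. Removing the edge (i_(k+1), j_(k+1)) from T_(k+1) then keeps the
  component of j_k in F_k connected to i'_(k+1), hence to j_(k+1), so the component of j_k in F_k
  is contained in the component of j_(k+1) in F_(k+1). Parts (a)-(c) follow by chasing these
  nested components along the path, together with the fact that removing an edge from a tree
  separates its endpoints.
*)

theory Submission
  imports Defs "HOL-Library.Transitive_Closure_Table"
begin

lemma adj_LR [simp]: "(Lv a, Rv b) \<in> adj G \<longleftrightarrow> (a, b) \<in> G"
  unfolding adj_def by blast

lemma adj_RL [simp]: "(Rv b, Lv a) \<in> adj G \<longleftrightarrow> (a, b) \<in> G"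
  unfolding adj_def by blast

lemma adjE:
  assumes "(u, v) \<in> adj G"
  obtains a b where "u = Lv a" "v = Rv b" "(a, b) \<in> G"
    | a b where "u = Rv b" "v = Lv a" "(a, b) \<in> G"
  using assms unfolding adj_def by blast

lemma adj_mono: "G \<subseteq> H \<Longrightarrow> adj G \<subseteq> adj H"
  unfolding adj_def by blast

lemma conn_refl [simp]: "conn G u u"
  unfolding conn_def by simp

lemma conn_trans: "conn G u v \<Longrightarrow> conn G v w \<Longrightarrow> conn G u w"
  unfolding conn_def by (rule rtrancl_trans)

lemma conn_sym: "conn G u v \<Longrightarrow> conn G v u"
proof -
  have "sym ((adj G)\<^sup>*)"
    by (rule sym_rtrancl) (auto simp: sym_def adj_def)
  then show "conn G u v \<Longrightarrow> conn G v u"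
    unfolding conn_def by (auto dest: symD)
qed

lemma conn_mono: "conn G u v \<Longrightarrow> G \<subseteq> H \<Longrightarrow> conn H u v"
  unfolding conn_def by (meson adj_mono rtrancl_mono subsetD)

lemma conn_edge: "(a, b) \<in> G \<Longrightarrow> conn G (Lv a) (Rv b)"
  unfolding conn_def by (simp add: r_into_rtrancl)

lemma conn_iff_rtrancl_path: "conn G u v \<longleftrightarrow> (\<exists>xs. rtrancl_path (in_rel (adj G)) u xs v)"
  unfolding conn_def rtranclp_eq_rtrancl_path [symmetric] by (simp add: rtranclp_rtrancl_eq)

lemma rtrancl_path_reaches:
  assumes "rtrancl_path r u xs v" and "w \<in> set xs"
  shows "r\<^sup>*\<^sup>* u w"
proof -
  obtain ys zs where "xs = ys @ w # zs"
    using split_list [OF assms(2)] by blast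
  with assms(1) have "rtrancl_path r u (ys @ [w]) w"
    by (auto elim: rtrancl_path_appendE)
  then show ?thesis
    by (auto simp: rtranclp_eq_rtrancl_path)
qed

lemma conn_simple_path:
  assumes "conn G u v"
  obtains xs where "rtrancl_path (in_rel (adj G)) u xs v" "distinct (u # xs)"
    "\<And>w. w \<in> set xs \<Longrightarrow> conn G u w"
proof -
  obtain ys where "rtrancl_path (in_rel (adj G)) u ys v"
    using assms conn_iff_rtrancl_path by blast
  then obtain xs where xs: "rtrancl_path (in_rel (adj G)) u xs v" "distinct (u # xs)"
    by (rule rtrancl_path_distinct)
  have "conn G u w" if "w \<in> set xs" for w
    using rtrancl_path_reaches [OF xs(1) that] conn_iff_rtrancl_path
    by (auto simp: rtranclp_eq_rtrancl_path)
  with xs that show ?thesis by blast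
qed

lemma spanning_tree_edge_verts:
  assumes "spanning_tree n d T" and "(a, b) \<in> T"
  shows "Lv a \<in> verts n d" and "Rv b \<in> verts n d"
  using assms unfolding spanning_tree_def subgraph_Knd_def verts_def by auto

lemma spanning_tree_Diff_edge_separates:
  assumes tree: "spanning_tree n d T" and e: "(a, b) \<in> T"
  shows "\<not> conn (T - {(a, b)}) (Lv a) (Rv b)"
proof
  assume "conn (T - {(a, b)}) (Lv a) (Rv b)"
  then obtain xs where path: "rtrancl_path (in_rel (adj (T - {(a, b)}))) (Lv a) xs (Rv b)"
    and dist: "distinct (Lv a # xs)"
    by (rule conn_simple_path)
  define cyc where "cyc = Lv a # xs"
  have "xs \<noteq> []"
  proof
    assume "xs = []"
    with path show False
      by cases auto
  qed
  then have last_xs: "last xs = Rv b"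
    using path by (rule rtrancl_path_last [rotated])
  have "xs \<noteq> [Rv b]"
    using rtrancl_path_nth [OF path, of 0] by auto
  with \<open>xs \<noteq> []\<close> last_xs have "length xs \<ge> 2"
    by (cases xs; cases "tl xs") auto
  moreover have "(cyc ! k, cyc ! Suc k) \<in> adj T" if "k < length cyc - 1" for k
    using rtrancl_path_nth [OF path, of k] that adj_mono [of "T - {(a, b)}" T]
    unfolding cyc_def by auto
  moreover have "(last cyc, hd cyc) \<in> adj T"
    using e last_xs \<open>xs \<noteq> []\<close> unfolding cyc_def by simp
  ultimately have "is_cycle T cyc"
    using dist unfolding is_cycle_def cyc_def by auto
  with tree show False
    unfolding spanning_tree_def acyclic_graph_def by blast
qed

lemma spanning_tree_Diff_edge_components:
  assumes tree: "spanning_tree n d T" and e: "(a, b) \<in> T" and v: "v \<in> verts n d"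
  shows "conn (T - {(a, b)}) (Lv a) v \<or> conn (T - {(a, b)}) (Rv b) v"
proof -
  have "conn T (Rv b) v"
    using tree v spanning_tree_edge_verts [OF tree e] unfolding spanning_tree_def by blast
  then have "(Rv b, v) \<in> (adj T)\<^sup>*"
    unfolding conn_def .
  then show ?thesis
  proof (induction rule: rtrancl_induct)
    case (step x y)
    show ?case
    proof (cases "(x, y) \<in> adj (T - {(a, b)})")
      case True
      with step.IH show ?thesis
        unfolding conn_def by (meson rtrancl.rtrancl_into_rtrancl)
    next
      case False
      with step.hyps(2) have "y = Lv a \<or> y = Rv b"
        by (auto elim: adjE)
      then show ?thesis by auto
    qed
  qed simp
qed

lemma conn_Diff_edge:
  assumes c: "conn H u v" and e: "(a, b) \<in> H" and away: "\<not> conn H u (Rv b)"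
  shows "conn (H - {(a, b)}) u v"
proof -
  have "\<not> conn H u (Lv a)"
    using away conn_trans [OF _ conn_edge [OF e]] by blast
  from c have "(u, v) \<in> (adj H)\<^sup>*"
    unfolding conn_def .
  then show ?thesis
  proof (induction rule: rtrancl_induct)
    case (step x y)
    have "conn H u x"
      using step.hyps(1) unfolding conn_def .
    with away \<open>\<not> conn H u (Lv a)\<close> have "x \<noteq> Lv a" "x \<noteq> Rv b"
      by auto
    with step.hyps(2) have "(x, y) \<in> adj (H - {(a, b)})"
      by (auto elim: adjE)
    with step.IH show ?case
      unfolding conn_def by (meson rtrancl.rtrancl_into_rtrancl)
  qed simp
qed

lemma distinct_map_fst_ex1:
  assumes "distinct (map fst ps)" and "u \<in> fst ` set ps"
  shows "\<exists>!v. (u, v) \<in> set ps"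
  using assms eq_key_imp_eq_value by fastforce

lemma distinct_map_snd_ex1:
  assumes "distinct (map snd ps)" and "v \<in> snd ` set ps"
  shows "\<exists>!u. (u, v) \<in> set ps"
proof -
  have "distinct (map fst (map prod.swap ps))" "v \<in> fst ` set (map prod.swap ps)"
    using assms by (simp_all add: image_image comp_def)
  from distinct_map_fst_ex1 [OF this] show ?thesis
    by auto
qed

lemma closed_walk_steps:
  assumes walk: "rtrancl_path r x xs x" and dist: "distinct xs"
  defines "S \<equiv> set (zip (x # xs) xs)"
  shows "\<And>u v. (u, v) \<in> S \<Longrightarrow> r u v"
    and "S \<subseteq> set xs \<times> set xs"
    and "\<And>u. u \<in> set xs \<Longrightarrow> \<exists>!v. (u, v) \<in> S"
    and "\<And>v. v \<in> set xs \<Longrightarrow> \<exists>!u. (u, v) \<in> S"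
proof -
  show "r u v" if "(u, v) \<in> S" for u v
    using that rtrancl_path_nth [OF walk] unfolding S_def by (auto simp: set_zip)
  have "distinct (butlast (x # xs)) \<and> set (butlast (x # xs)) = set xs"
  proof (cases xs rule: rev_cases)
    case (snoc ys y)
    with rtrancl_path_last [OF walk] dist show ?thesis
      by auto
  qed simp
  moreover have "map fst (zip (x # xs) xs) = butlast (x # xs)"
    by (simp add: map_fst_zip_take butlast_conv_take)
  ultimately have fst_steps: "distinct (map fst (zip (x # xs) xs))" "fst ` S = set xs"
    unfolding S_def by (simp, metis list.set_map)
  have snd_steps: "map snd (zip (x # xs) xs) = xs"
    by (simp add: map_snd_zip_take)
  then have "snd ` S = set xs"
    unfolding S_def by (simp, metis list.set_map)
  show "S \<subseteq> set xs \<times> set xs"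
  proof
    fix p
    assume "p \<in> S"
    then have "fst p \<in> set xs" "snd p \<in> set xs"
      using fst_steps(2) \<open>snd ` S = set xs\<close> by blast+
    then show "p \<in> set xs \<times> set xs"
      by (simp add: mem_Times_iff)
  qed
  show "\<exists>!v. (u, v) \<in> S" if "u \<in> set xs" for u
    using distinct_map_fst_ex1 [OF fst_steps(1), of u] fst_steps(2) that
    unfolding S_def by blast
  show "\<exists>!u. (u, v) \<in> S" if "v \<in> set xs" for v
    using distinct_map_snd_ex1 [of "zip (x # xs) xs" v] dist that \<open>snd ` S = set xs\<close>
    unfolding S_def snd_steps by blast
qed

lemma bipartite_bijection_perfect_matching:
  assumes out: "\<And>u. u \<in> V \<Longrightarrow> \<exists>!v. (u, v) \<in> S"
    and into: "\<And>v. v \<in> V \<Longrightarrow> \<exists>!u. (u, v) \<in> S"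
    and sub: "S \<subseteq> V \<times> V"
    and bip: "\<And>u v. (u, v) \<in> S \<Longrightarrow>
      (\<exists>a b. u = Lv a \<and> v = Rv b) \<or> (\<exists>a b. u = Rv b \<and> v = Lv a)"
  shows "perfect_matching {(a, b). (Lv a, Rv b) \<in> S} {a. Lv a \<in> V} {b. Rv b \<in> V}"
  unfolding perfect_matching_def
proof (intro conjI ballI)
  show "{(a, b). (Lv a, Rv b) \<in> S} \<subseteq> {a. Lv a \<in> V} \<times> {b. Rv b \<in> V}"
    using sub by blast
next
  fix a
  assume "a \<in> {a. Lv a \<in> V}"
  then obtain v where v: "(Lv a, v) \<in> S" and uniq: "\<And>v'. (Lv a, v') \<in> S \<Longrightarrow> v' = v"
    using out by blast
  obtain b where b: "v = Rv b"
    using bip [OF v] by blast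
  show "\<exists>!b. (a, b) \<in> {(a, b). (Lv a, Rv b) \<in> S}"
  proof (rule ex1I)
    show "(a, b) \<in> {(a, b). (Lv a, Rv b) \<in> S}"
      using v b by simp
  next
    fix b'
    assume "(a, b') \<in> {(a, b). (Lv a, Rv b) \<in> S}"
    then have "(Lv a, Rv b') \<in> S" by simp
    from uniq [OF this] b show "b' = b" by simp
  qed
next
  fix b
  assume "b \<in> {b. Rv b \<in> V}"
  then obtain u where u: "(u, Rv b) \<in> S" and uniq: "\<And>u'. (u', Rv b) \<in> S \<Longrightarrow> u' = u"
    using into by blast
  obtain a where a: "u = Lv a"
    using bip [OF u] by blast
  show "\<exists>!a. (a, b) \<in> {(a, b). (Lv a, Rv b) \<in> S}"
  proof (rule ex1I)
    show "(a, b) \<in> {(a, b). (Lv a, Rv b) \<in> S}"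
      using u a by simp
  next
    fix a'
    assume "(a', b) \<in> {(a, b). (Lv a, Rv b) \<in> S}"
    then have "(Lv a', Rv b) \<in> S" by simp
    from uniq [OF this] a show "a' = a" by simp
  qed
qed

definition alternating_step :: "graph \<Rightarrow> graph \<Rightarrow> vert \<Rightarrow> vert \<Rightarrow> bool" where
  "alternating_step G1 G2 u v \<longleftrightarrow>
     (\<exists>a b. u = Lv a \<and> v = Rv b \<and> (a, b) \<in> G1) \<or>
     (\<exists>a b. u = Rv b \<and> v = Lv a \<and> (a, b) \<in> G2)"

text \<open>The left-to-right and the right-to-left steps of a closed alternating walk are perfect
  matchings of the same vertex sets in G1 and in G2, so compatibility forces them to coincide.\<close>

lemma compatible_alternating_cycle:
  assumes compat: "compatible n d G1 G2" and sub: "subgraph_Knd n d G1"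
    and walk: "rtrancl_path (alternating_step G1 G2) x xs x" and dist: "distinct xs"
    and step: "(Lv a, Rv b) \<in> set (zip (x # xs) xs)"
  shows "(a, b) \<in> G2"
proof -
  define S where "S = set (zip (x # xs) xs)"
  note steps = closed_walk_steps [OF walk dist, folded S_def]
  have bip: "(\<exists>a b. u = Lv a \<and> v = Rv b) \<or> (\<exists>a b. u = Rv b \<and> v = Lv a)"
    if "(u, v) \<in> S" for u v
    using steps(1) [OF that] unfolding alternating_step_def by blast
  define I J where "I = {a. Lv a \<in> set xs}" and "J = {b. Rv b \<in> set xs}"
  define M1 M2 where "M1 = {(a, b). (Lv a, Rv b) \<in> S}" and "M2 = {(a, b). (Rv b, Lv a) \<in> S}"
  have M1: "perfect_matching M1 I J"
    unfolding M1_def I_def J_def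
    by (rule bipartite_bijection_perfect_matching [OF steps(3,4,2) bip])
  have "perfect_matching {(a, b). (Lv a, Rv b) \<in> S\<inverse>} I J"
    unfolding I_def J_def
    by (rule bipartite_bijection_perfect_matching) (use steps(2-4) in \<open>auto dest: bip\<close>)
  then have M2: "perfect_matching M2 I J"
    unfolding M2_def by simp
  have "M1 \<subseteq> G1" "M2 \<subseteq> G2"
    using steps(1) unfolding M1_def M2_def alternating_step_def by auto
  moreover have "I \<subseteq> {1..n}" "J \<subseteq> {1..d}"
    using M1 \<open>M1 \<subseteq> G1\<close> sub unfolding perfect_matching_def subgraph_Knd_def by blast+
  ultimately have "M1 = M2"
    using compat M1 M2 unfolding compatible_def by blast
  moreover have "(a, b) \<in> M1"
    using step unfolding M1_def S_def by simp
  ultimately show ?thesis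
    using \<open>M2 \<subseteq> G2\<close> by blast
qed

lemma compatible_exchange_separates:
  assumes tree1: "spanning_tree n d G1" and tree2: "spanning_tree n d G2"
    and compat: "compatible n d G1 G2"
    and e1: "(i, j) \<in> G1" and e2: "(i', j') \<in> G2"
    and exchange: "G1 - {(i, j)} = G2 - {(i', j')}" and "j \<noteq> j'"
  shows "\<not> conn (G1 - {(i, j)}) (Rv j) (Rv j')"
proof
  define F where "F = G1 - {(i, j)}"
  assume "conn (G1 - {(i, j)}) (Rv j) (Rv j')"
  then have jj': "conn F (Rv j) (Rv j')"
    unfolding F_def .
  have sep1: "\<not> conn F (Lv i) (Rv j)"
    using spanning_tree_Diff_edge_separates [OF tree1 e1] unfolding F_def .
  have sep2: "\<not> conn F (Lv i') (Rv j')"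
    using spanning_tree_Diff_edge_separates [OF tree2 e2] exchange unfolding F_def by simp
  have "conn F (Lv i) (Lv i') \<or> conn F (Rv j) (Lv i')"
    using spanning_tree_Diff_edge_components [OF tree1 e1 spanning_tree_edge_verts(1) [OF tree2 e2]]
    unfolding F_def .
  with jj' sep2 have ii': "conn F (Lv i') (Lv i)"
    by (meson conn_sym conn_trans)
  obtain P1 where P1: "rtrancl_path (in_rel (adj F)) (Rv j) P1 (Rv j')" "distinct (Rv j # P1)"
    and P1_conn: "\<And>w. w \<in> set P1 \<Longrightarrow> conn F (Rv j) w"
    using conn_simple_path [OF jj'] by blast
  obtain P2 where P2: "rtrancl_path (in_rel (adj F)) (Lv i') P2 (Lv i)" "distinct (Lv i' # P2)"
    and P2_conn: "\<And>w. w \<in> set P2 \<Longrightarrow> conn F (Lv i') w"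
    using conn_simple_path [OF ii'] by blast
  define W where "W = Rv j # P1 @ Lv i' # P2"
  have "F \<subseteq> G1" "F \<subseteq> G2"
    using exchange unfolding F_def by auto
  then have F_step: "alternating_step G1 G2 u v" if "in_rel (adj F) u v" for u v
    using that unfolding alternating_step_def in_rel_def by (elim adjE) blast+
  have "rtrancl_path (alternating_step G1 G2) (Lv i') P2 (Lv i)"
    using P2(1) F_step by (rule rtrancl_path_mono)
  then have "rtrancl_path (alternating_step G1 G2) (Rv j') (Lv i' # P2) (Lv i)"
    using e2 by (auto simp: alternating_step_def intro: rtrancl_path.step)
  with rtrancl_path_mono [OF P1(1) F_step]
  have "rtrancl_path (alternating_step G1 G2) (Rv j) (P1 @ Lv i' # P2) (Lv i)"
    by (rule rtrancl_path_trans)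
  then have walk: "rtrancl_path (alternating_step G1 G2) (Lv i) W (Lv i)"
    unfolding W_def using e1 by (auto simp: alternating_step_def intro: rtrancl_path.step)
  have "conn F (Rv j) w" if "w \<in> set (Rv j # P1)" for w
    using that P1_conn by auto
  moreover have "conn F w (Lv i)" if "w \<in> set (Lv i' # P2)" for w
    using that P2_conn ii' by (auto intro: conn_sym conn_trans)
  ultimately have "set (Rv j # P1) \<inter> set (Lv i' # P2) = {}"
    using sep1 by (meson conn_sym conn_trans disjoint_iff)
  then have "distinct W"
    using P1(2) P2(2) distinct_append [of "Rv j # P1" "Lv i' # P2"] unfolding W_def by simp
  moreover have "(Lv i, Rv j) \<in> set (zip (Lv i # W) W)"
    unfolding W_def by simp
  ultimately have "(i, j) \<in> G2"
    using compatible_alternating_cycle [OF compat _ walk] tree1 unfolding spanning_tree_def by blast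
  moreover have "(i, j) \<notin> G2 - {(i', j')}"
    using exchange by blast
  ultimately show False
    using \<open>j \<noteq> j'\<close> by blast
qed

text \<open>T k stands for TT(t + e_(js k)) along a path js 0, ..., js L of the tree-linkage graph.\<close>

locale linkage_path =
  fixes n d L :: nat and T :: "nat \<Rightarrow> graph" and js ii ii' :: "nat \<Rightarrow> nat"
  assumes trees: "\<And>m. m \<le> L \<Longrightarrow> spanning_tree n d (T m)"
    and compat: "\<And>m m'. m \<le> L \<Longrightarrow> m' \<le> L \<Longrightarrow> compatible n d (T m) (T m')"
    and js_inj: "inj_on js {0..L}"
    and leaving: "\<And>k. k < L \<Longrightarrow> T k - T (Suc k) = {(ii k, js k)}"
    and entering: "\<And>k. k < L \<Longrightarrow> T (Suc k) - T k = {(ii' (Suc k), js (Suc k))}"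
begin

definition forest :: "nat \<Rightarrow> graph" where
  "forest k = T k - {(ii k, js k)}"

lemma leaving_edge:
  assumes "k < L"
  shows "(ii k, js k) \<in> T k" and "(ii k, js k) \<notin> T (Suc k)"
  using leaving [OF assms] by blast+

lemma entering_edge:
  assumes "k < L"
  shows "(ii' (Suc k), js (Suc k)) \<in> T (Suc k)" and "(ii' (Suc k), js (Suc k)) \<notin> T k"
  using entering [OF assms] by blast+

lemma forest_eq: "k < L \<Longrightarrow> T (Suc k) - {(ii' (Suc k), js (Suc k))} = forest k"
  using leaving entering unfolding forest_def by blast

lemma js_neq: "a \<le> L \<Longrightarrow> b \<le> L \<Longrightarrow> a \<noteq> b \<Longrightarrow> js a \<noteq> js b"
  using js_inj unfolding inj_on_def by auto

lemma forest_separates: "k < L \<Longrightarrow> \<not> conn (forest k) (Rv (js k)) (Rv (js (Suc k)))"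
  using compatible_exchange_separates [OF trees trees compat leaving_edge(1) entering_edge(1)]
    forest_eq js_neq unfolding forest_def by simp

lemma forest_separates_leaving: "k < L \<Longrightarrow> \<not> conn (forest k) (Lv (ii k)) (Rv (js k))"
  using spanning_tree_Diff_edge_separates [OF trees leaving_edge(1)] unfolding forest_def by simp

lemma forest_separates_entering:
  "k < L \<Longrightarrow> \<not> conn (forest k) (Lv (ii' (Suc k))) (Rv (js (Suc k)))"
  using spanning_tree_Diff_edge_separates [OF trees entering_edge(1)] forest_eq by simp

lemma forest_conn_entering:
  assumes "k < L"
  shows "conn (forest k) (Rv (js k)) (Lv (ii' (Suc k)))"
proof -
  have "conn (forest k) (Lv (ii' (Suc k))) (Rv (js k))
      \<or> conn (forest k) (Rv (js (Suc k))) (Rv (js k))"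
    using spanning_tree_Diff_edge_components [OF trees entering_edge(1)
        spanning_tree_edge_verts(2) [OF trees leaving_edge(1)]] forest_eq assms
    by simp
  then show ?thesis
    using forest_separates [OF assms] conn_sym by blast
qed

lemma forest_conn_leaving:
  assumes "k < L"
  shows "conn (forest k) (Rv (js (Suc k))) (Lv (ii k))"
proof -
  have "conn (forest k) (Lv (ii k)) (Rv (js (Suc k)))
      \<or> conn (forest k) (Rv (js k)) (Rv (js (Suc k)))"
    using spanning_tree_Diff_edge_components [OF trees leaving_edge(1)
        spanning_tree_edge_verts(2) [OF trees entering_edge(1)]] assms
    unfolding forest_def by simp
  then show ?thesis
    using forest_separates [OF assms] conn_sym by blast
qed

text \<open>If the two near labels at js (Suc k) agreed, then forest k = forest (Suc k), so T k and
  T (Suc (Suc k)) would differ by a single exchange; but forest k connects js k and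
  js (Suc (Suc k)) through that common label.\<close>

lemma near_labels_distinct: "Suc k < L \<Longrightarrow> ii' (Suc k) \<noteq> ii (Suc k)"
proof
  assume k: "Suc k < L" and same_label: "ii' (Suc k) = ii (Suc k)"
  then have same_forest: "forest k = forest (Suc k)"
    using forest_eq [of k] unfolding forest_def by simp
  have "\<not> conn (forest k) (Rv (js k)) (Rv (js (Suc (Suc k))))"
    using compatible_exchange_separates [OF trees trees compat leaving_edge(1) entering_edge(1),
        of k "Suc k"] forest_eq [of "Suc k"] same_forest js_neq [of k "Suc (Suc k)"] k
    unfolding forest_def by simp
  moreover have "conn (forest k) (Rv (js k)) (Lv (ii (Suc k)))"
    using forest_conn_entering [of k] same_label k by simp
  moreover have "conn (forest k) (Rv (js (Suc (Suc k)))) (Lv (ii (Suc k)))"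
    using forest_conn_leaving [OF k] same_forest by simp
  ultimately show False
    by (meson conn_sym conn_trans)
qed

lemma component_Suc:
  assumes k: "Suc k < L" and c: "conn (forest k) (Rv (js k)) v"
  shows "conn (forest (Suc k)) (Rv (js (Suc k))) v"
proof -
  let ?e = "(ii (Suc k), js (Suc k))" and ?e' = "(ii' (Suc k), js (Suc k))"
  have "?e \<noteq> ?e'"
    using near_labels_distinct [OF k] by simp
  have e_in: "?e \<in> forest k"
    using leaving_edge(1) [OF k] forest_eq [of k] k \<open>?e \<noteq> ?e'\<close> by auto
  have "conn (forest k) (Lv (ii' (Suc k))) v"
    using forest_conn_entering [of k] k c by (meson Suc_lessD conn_sym conn_trans)
  then have "conn (forest k - {?e}) (Lv (ii' (Suc k))) v"
    by (rule conn_Diff_edge [OF _ e_in]) (use forest_separates_entering [of k] k in simp)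
  moreover have "forest k - {?e} \<subseteq> forest (Suc k)"
    using forest_eq [of k] k unfolding forest_def by auto
  moreover have "?e' \<in> forest (Suc k)"
    using entering_edge(1) [of k] k \<open>?e \<noteq> ?e'\<close> unfolding forest_def by auto
  ultimately show ?thesis
    by (meson conn_edge conn_mono conn_sym conn_trans)
qed

lemma component_mono:
  assumes "k \<le> m" and "m < L" and "conn (forest k) (Rv (js k)) v"
  shows "conn (forest m) (Rv (js m)) v"
  using assms(1,2)
proof (induction m rule: dec_induct)
  case base
  show ?case using assms(3) .
next
  case (step m)
  show ?case
    using component_Suc [OF step.prems step.IH [OF Suc_lessD [OF step.prems]]] .
qed

lemma forest_separates_later:
  assumes "k < b" and "b \<le> L"
  shows "\<not> conn (forest k) (Rv (js k)) (Rv (js b))"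
proof
  assume "conn (forest k) (Rv (js k)) (Rv (js b))"
  then have "conn (forest (b - 1)) (Rv (js (b - 1))) (Rv (js b))"
    using assms by (intro component_mono [of k "b - 1"]) auto
  with forest_separates [of "b - 1"] assms show False
    by simp
qed

lemma forest_separates_path:
  assumes "k < L" and "a \<le> k" and "k < b" and "b \<le> L"
  shows "\<not> conn (forest k) (Rv (js a)) (Rv (js b))"
proof
  assume "conn (forest k) (Rv (js a)) (Rv (js b))"
  moreover have "conn (forest k) (Rv (js k)) (Rv (js a))"
    using component_mono [of a k "Rv (js a)"] assms by simp
  ultimately show False
    using forest_separates_later [of k b] assms conn_trans by blast
qed

lemma entering_label_ne_leaving_label:
  assumes "0 < k" and "k \<le> k'" and "k' < L"
  shows "ii' k \<noteq> ii k'"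
proof
  assume same_label: "ii' k = ii k'"
  obtain p where k: "k = Suc p"
    using assms(1) gr0_implies_Suc by blast
  have "conn (forest p) (Rv (js p)) (Lv (ii' k))"
    using forest_conn_entering [of p] assms k by simp
  then have "conn (forest k') (Rv (js k')) (Lv (ii k'))"
    using component_mono [of p k'] assms k same_label by simp
  with forest_separates_leaving [OF assms(3)] show False
    using conn_sym by blast
qed

lemma common_edge_not_leaving:
  assumes common: "\<And>m. m \<le> L \<Longrightarrow> (i, js k) \<in> T m" and "k \<le> k'" and "k' < L"
  shows "ii k' \<noteq> i"
proof (cases "k = k'")
  case True
  then show ?thesis
    using common [of "Suc k'"] leaving_edge(2) [of k'] assms by auto
next
  case False
  show ?thesis
  proof
    assume same_label: "ii k' = i"
    have "(i, js k) \<in> forest k'"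
      using common [of k'] js_neq [of k k'] False assms unfolding forest_def by auto
    then have "conn (forest k') (Lv i) (Rv (js k))"
      by (rule conn_edge)
    moreover have "conn (forest k') (Rv (js k')) (Rv (js k))"
      using component_mono [of k k'] assms by simp
    ultimately show False
      using forest_separates_leaving [OF assms(3)] same_label by (meson conn_sym conn_trans)
  qed
qed

lemma common_edge_not_entering:
  assumes common: "\<And>m. m \<le> L \<Longrightarrow> (i, js k) \<in> T m"
    and "0 < k'" and "k' \<le> k" and "k \<le> L"
  shows "ii' k' \<noteq> i"
proof -
  obtain p where k': "k' = Suc p"
    using assms(2) gr0_implies_Suc by blast
  show ?thesis
  proof (cases "k = k'")
    case True
    then show ?thesis
      using common [of p] entering_edge(2) [of p] assms k' by auto
  next
    case False
    show ?thesis
    proof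
      assume same_label: "ii' k' = i"
      have "(i, js k) \<in> forest p"
        using common [of k'] js_neq [of k k'] forest_eq [of p] False assms k' by auto
      then have "conn (forest p) (Lv i) (Rv (js k))"
        by (rule conn_edge)
      moreover have "conn (forest p) (Rv (js p)) (Lv (ii' k'))"
        using forest_conn_entering [of p] assms k' by simp
      ultimately have "conn (forest p) (Rv (js p)) (Rv (js k))"
        using same_label conn_trans by blast
      with forest_separates_later [of p k] assms k' show False
        by simp
    qed
  qed
qed

end

lemma lattice_pt_plus_e:
  assumes "lattice_pt d k t" and "j \<in> {1..d}"
  shows "lattice_pt d (Suc k) (plus_e t j)"
proof -
  have "(\<Sum>j'\<in>{1..d}. plus_e t j j')
      = (\<Sum>j'\<in>{1..d}. t j') + (\<Sum>j'\<in>{1..d}. if j' = j then 1 else 0)"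
    unfolding plus_e_def by (simp add: sum.distrib)
  also have "\<dots> = Suc k"
    using assms unfolding lattice_pt_def by simp
  finally show ?thesis
    using assms unfolding lattice_pt_def plus_e_def by auto
qed

lemma TT_mem:
  assumes "\<exists>!G. G \<in> \<G> \<and> has_RD d G u"
  shows "TT d \<G> u \<in> \<G>"
  using theI' [OF assms] unfolding TT_def by blast

lemma linkage_path_vertex_range:
  assumes "L \<ge> 1" and "m \<le> L"
    and path_edges: "\<forall>k < L. linkage_edge d \<G> t (js k) (js (Suc k)) (ii k) (ii' (Suc k))"
  shows "js m \<in> {1..d}"
proof (cases "m < L")
  case True
  with path_edges show ?thesis
    unfolding linkage_edge_def by blast
next
  case False
  have "linkage_edge d \<G> t (js (L - 1)) (js (Suc (L - 1))) (ii (L - 1)) (ii' (Suc (L - 1)))"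
    using path_edges assms(1) by (meson diff_less zero_less_one less_le_trans)
  moreover have "Suc (L - 1) = m"
    using False assms(1,2) by simp
  ultimately show ?thesis
    unfolding linkage_edge_def by simp
qed

lemma linkage_path_TT:
  assumes "n \<ge> 2" and enc: "encodes_fmsd n d \<G>"
    and known_unique: "\<forall>u. lattice_pt d (n - 1) u \<longrightarrow> (\<exists>!G. G \<in> \<G> \<and> has_RD d G u)"
    and t: "lattice_pt d (n - 2) t"
    and "L \<ge> 1" and path_distinct: "inj_on js {0..L}"
    and path_edges: "\<forall>k < L. linkage_edge d \<G> t (js k) (js (Suc k)) (ii k) (ii' (Suc k))"
  shows "linkage_path n d L (\<lambda>m. TT d \<G> (plus_e t (js m))) js ii ii'"
proof
  have in_G: "TT d \<G> (plus_e t (js m)) \<in> \<G>" if "m \<le> L" for m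
  proof -
    have "n - 1 = Suc (n - 2)"
      using \<open>n \<ge> 2\<close> by simp
    then have "lattice_pt d (n - 1) (plus_e t (js m))"
      using lattice_pt_plus_e [OF t linkage_path_vertex_range [OF \<open>L \<ge> 1\<close> that path_edges]]
      by simp
    with known_unique show ?thesis
      by (blast intro: TT_mem)
  qed
  have trees: "\<forall>G \<in> \<G>. spanning_tree n d G"
    and compat: "\<forall>G \<in> \<G>. \<forall>G' \<in> \<G>. compatible n d G G'"
    using enc unfolding encodes_fmsd_def by simp_all
  fix m m'
  assume "m \<le> L" and "m' \<le> L"
  with in_G trees compat
  show "spanning_tree n d (TT d \<G> (plus_e t (js m)))"
    and "compatible n d (TT d \<G> (plus_e t (js m))) (TT d \<G> (plus_e t (js m')))"
    by blast+
next
  show "inj_on js {0..L}"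
    by (rule path_distinct)
next
  fix k
  assume "k < L"
  with path_edges have "linkage_edge d \<G> t (js k) (js (Suc k)) (ii k) (ii' (Suc k))"
    by blast
  then show "TT d \<G> (plus_e t (js k)) - TT d \<G> (plus_e t (js (Suc k))) = {(ii k, js k)}"
    and "TT d \<G> (plus_e t (js (Suc k))) - TT d \<G> (plus_e t (js k))
      = {(ii' (Suc k), js (Suc k))}"
    unfolding linkage_edge_def by simp_all
qed

theorem mainTheorem15:
  fixes n d :: nat and \<G> :: "graph set" and t :: "nat \<Rightarrow> nat"
    and L :: nat and js ii ii' :: "nat \<Rightarrow> nat"
  assumes "n \<ge> 2" and "d \<ge> 1"
    and enc: "encodes_fmsd n d \<G>"
    and known_unique: "\<forall>u. lattice_pt d (n - 1) u \<longrightarrow> (\<exists>!G. G \<in> \<G> \<and> has_RD d G u)"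
    and known_all: "\<forall>G \<in> \<G>. \<exists>u. lattice_pt d (n - 1) u \<and> G = TT d \<G> u"
    and t: "lattice_pt d (n - 2) t"
    and l: "L \<ge> 1"
    and path_distinct: "inj_on js {0..L}"
    and path_edges: "\<forall>k < L. linkage_edge d \<G> t (js k) (js (Suc k)) (ii k) (ii' (Suc k))"
  shows
    "(\<forall>k < L. \<forall>a \<le> k. \<forall>b. k < b \<and> b \<le> L \<longrightarrow>
        \<not> conn (TT d \<G> (plus_e t (js k)) - {(ii k, js k)}) (Rv (js a)) (Rv (js b)))
     \<and> (\<forall>k k'. 1 \<le> k \<and> k \<le> k' \<and> k' \<le> L - 1 \<longrightarrow> ii' k \<noteq> ii k')
     \<and> (\<forall>i k. k \<le> L \<and> (i, js k) \<in> T_t d \<G> t \<longrightarrow>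
          (\<forall>k'. k \<le> k' \<and> k' \<le> L - 1 \<longrightarrow> ii k' \<noteq> i) \<and>
          (\<forall>k'. 1 \<le> k' \<and> k' \<le> k \<longrightarrow> ii' k' \<noteq> i))"
proof -
  interpret linkage_path n d L "\<lambda>m. TT d \<G> (plus_e t (js m))" js ii ii'
    by (rule linkage_path_TT [OF assms(1,3,4,6-9)])
  have common: "(i, js k) \<in> TT d \<G> (plus_e t (js m))"
    if "(i, js k) \<in> T_t d \<G> t" and "m \<le> L" for i k m
    using that linkage_path_vertex_range [OF l _ path_edges] unfolding T_t_def by blast
  show ?thesis
  proof (intro conjI allI impI)
    fix k a b
    assume "k < L" "a \<le> k" "k < b \<and> b \<le> L"
    then show "\<not> conn (TT d \<G> (plus_e t (js k)) - {(ii k, js k)}) (Rv (js a)) (Rv (js b))"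
      using forest_separates_path unfolding forest_def by blast
  next
    fix k k'
    assume "1 \<le> k \<and> k \<le> k' \<and> k' \<le> L - 1"
    with l show "ii' k \<noteq> ii k'"
      by (intro entering_label_ne_leaving_label) auto
  next
    fix i k k'
    assume "k \<le> L \<and> (i, js k) \<in> T_t d \<G> t" and "k \<le> k' \<and> k' \<le> L - 1"
    with l show "ii k' \<noteq> i"
      by (intro common_edge_not_leaving [OF common]) auto
  next
    fix i k k'
    assume "k \<le> L \<and> (i, js k) \<in> T_t d \<G> t" and "1 \<le> k' \<and> k' \<le> k"
    then show "ii' k' \<noteq> i"
      by (intro common_edge_not_entering [OF common]) auto
  qed
qed

end
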